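(* Let $\beta_1,\dots,\beta_{14}$ be a basis of $iD$ with $\operatorname{Tr}(\beta_a\beta_b)=\frac12\delta_{ab}$, where $D\subset\mathfrak{so}(7)$ is the derivation algebra of the octonions acting on the imaginary octonions $\operatorname{Im}(\mathbb O)\cong\mathbb R^7$. If $v\in\mathbb R^{14}$ is such that $\frac17(\mathbf 1_7+\sum_iv_i\beta_i)$ is a density matrix, then $|v|^2\le 8(10-\sqrt{65})$; in particular $|v|\le 3.93$.
   Context: A density matrix is a positive semidefinite Hermitian matrix of trace 1. The $\beta_i$ are Hermitian $7\times7$ matrices spanning $i$ times the 7-dimensional fundamental representation of $\mathfrak g_2$. *)

theory Defs
  imports Complex_Main
begin

text \<open>Octonions as R^8 with basis e0 (= 1), e1..e7, represented as nat => real
  (only components 0..7 matter). Multiplication via the standard Fano-plane table: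
  e_i e_j = - delta_ij e0 + eps_ijk e_k for imaginary units, with oriented triples
  (1,2,3),(1,4,5),(1,7,6),(2,4,6),(2,5,7),(3,4,7),(3,6,5).\<close>

definition fano_triples :: "(nat \<times> nat \<times> nat) list" where
  "fano_triples = [(1,2,3),(1,4,5),(1,7,6),(2,4,6),(2,5,7),(3,4,7),(3,6,5)]"

definition oct_eps :: "nat \<Rightarrow> nat \<Rightarrow> nat \<Rightarrow> real" where
  "oct_eps i j k =
     (if (i,j,k) \<in> set fano_triples \<or> (j,k,i) \<in> set fano_triples \<or> (k,i,j) \<in> set fano_triples
      then 1
      else if (j,i,k) \<in> set fano_triples \<or> (i,k,j) \<in> set fano_triples \<or> (k,j,i) \<in> set fano_triples
      then -1 else 0)"

definition oct_c :: "nat \<Rightarrow> nat \<Rightarrow> nat \<Rightarrow> real" where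
  "oct_c i j k =
     (if i = 0 then (if j = k then 1 else 0)
      else if j = 0 then (if i = k then 1 else 0)
      else if i = j then (if k = 0 then -1 else 0)
      else oct_eps i j k)"

definition oct_mult :: "(nat \<Rightarrow> real) \<Rightarrow> (nat \<Rightarrow> real) \<Rightarrow> (nat \<Rightarrow> real)" where
  "oct_mult x y = (\<lambda>k. \<Sum>i<8. \<Sum>j<8. x i * y j * oct_c i j k)"

definition oct_apply :: "(nat \<Rightarrow> nat \<Rightarrow> real) \<Rightarrow> (nat \<Rightarrow> real) \<Rightarrow> (nat \<Rightarrow> real)" where
  "oct_apply M x = (\<lambda>i. \<Sum>j<8. M i j * x j)"

definition is_oct_derivation :: "(nat \<Rightarrow> nat \<Rightarrow> real) \<Rightarrow> bool" where
  "is_oct_derivation M \<longleftrightarrow>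
     (\<forall>x y. \<forall>k<8. oct_apply M (oct_mult x y) k
                  = oct_mult (oct_apply M x) y k + oct_mult x (oct_apply M y) k)"

text \<open>Extend a 7x7 matrix on Im(O) = span(e1..e7) (indices 0..6 correspond to e1..e7)
  to an 8x8 matrix on O acting as 0 on e0.\<close>
definition ext_im :: "(nat \<Rightarrow> nat \<Rightarrow> real) \<Rightarrow> (nat \<Rightarrow> nat \<Rightarrow> real)" where
  "ext_im A = (\<lambda>i j. if 1 \<le> i \<and> i < 8 \<and> 1 \<le> j \<and> j < 8 then A (i - 1) (j - 1) else 0)"

definition derD :: "(nat \<Rightarrow> nat \<Rightarrow> real) set" where
  "derD = {A. is_oct_derivation (ext_im A)}"

definition in_iD :: "(nat \<Rightarrow> nat \<Rightarrow> complex) \<Rightarrow> bool" where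
  "in_iD B \<longleftrightarrow> (\<exists>A\<in>derD. \<forall>i<7. \<forall>j<7. B i j = \<i> * complex_of_real (A i j))"

definition density_matrix7 :: "(nat \<Rightarrow> nat \<Rightarrow> complex) \<Rightarrow> bool" where
  "density_matrix7 \<rho> \<longleftrightarrow>
     (\<forall>i<7. \<forall>j<7. \<rho> j i = cnj (\<rho> i j)) \<and>
     (\<forall>x::nat \<Rightarrow> complex. 0 \<le> Re (\<Sum>i<7. \<Sum>j<7. cnj (x i) * \<rho> i j * x j)) \<and>
     (\<Sum>i<7. \<rho> i i) = 1"

end

theory Submission
  imports Defs
begin

(* X = sum_a v_a beta_a is i times a real matrix, so replacing a test vector z by its
   conjugate flips the sign of z* X z.  Hence 1 + X >= 0 forces 1 - X >= 0 as well, and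
   polarizing the two inequalities between e_j and the j-th column of X gives
   (X^2)_jj <= 1.  Orthonormality of the beta_a turns tr X^2 <= 7 into |v|^2 <= 14,
   which is stronger than the bound 8 (10 - sqrt 65) = 15.5...  Only the fact that the
   beta_a lie in i so(7) is used, not the derivation property or the spanning hypothesis. *)

definition qform :: "nat \<Rightarrow> (nat \<Rightarrow> nat \<Rightarrow> complex) \<Rightarrow> (nat \<Rightarrow> complex) \<Rightarrow> (nat \<Rightarrow> complex) \<Rightarrow> complex"
  where "qform n M x y = (\<Sum>i<n. \<Sum>j<n. cnj (x i) * M i j * y j)"

definition id_matrix :: "nat \<Rightarrow> nat \<Rightarrow> complex"
  where "id_matrix i j = (if i = j then 1 else 0)"

lemma qform_id_matrix: "qform n id_matrix x x = (\<Sum>i<n. cnj (x i) * x i)"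
  unfolding qform_def id_matrix_def by (intro sum.cong refl) (simp add: if_distrib if_distribR cong: if_cong)

lemma qform_add_matrix: "qform n (\<lambda>i j. M i j + N i j) x y = qform n M x y + qform n N x y"
  unfolding qform_def by (simp add: algebra_simps sum.distrib)

lemma qform_scale_matrix: "qform n (\<lambda>i j. c * M i j) x y = c * qform n M x y"
  unfolding qform_def by (simp add: algebra_simps sum_distrib_left)

lemma qform_polarization:
  "qform n M (\<lambda>i. x i + y i) (\<lambda>i. x i + y i) - qform n M (\<lambda>i. x i - y i) (\<lambda>i. x i - y i)
     = 2 * (qform n M x y + qform n M y x)"
  unfolding qform_def
  by (simp add: sum_subtractf[symmetric] sum_distrib_left sum.distrib[symmetric] algebra_simps)

lemma qform_parallelogram:
  "qform n M (\<lambda>i. x i + y i) (\<lambda>i. x i + y i) + qform n M (\<lambda>i. x i - y i) (\<lambda>i. x i - y i)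
     = 2 * (qform n M x x + qform n M y y)"
  unfolding qform_def
  by (simp add: sum_distrib_left sum.distrib[symmetric] algebra_simps)

lemma qform_cnj:
  "qform n M (\<lambda>i. cnj (x i)) (\<lambda>i. cnj (y i)) = cnj (qform n (\<lambda>i j. cnj (M i j)) x y)"
  unfolding qform_def by simp

lemma qform_unit_left:
  assumes "j < n"
  shows "qform n M (\<lambda>i. if i = j then 1 else 0) y = (\<Sum>k<n. M j k * y k)"
proof -
  have "qform n M (\<lambda>i. if i = j then 1 else 0) y = (\<Sum>i<n. if i = j then \<Sum>k<n. M i k * y k else 0)"
    unfolding qform_def by (intro sum.cong refl) auto
  then show ?thesis using assms by simp
qed

lemma qform_unit_right:
  assumes "j < n"
  shows "qform n M x (\<lambda>k. if k = j then 1 else 0) = (\<Sum>i<n. cnj (x i) * M i j)"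
  unfolding qform_def using assms by (intro sum.cong refl) (simp add: if_distrib sum.delta' cong: if_cong)

lemma qform_cnj_vectors_real:
  assumes "\<forall>i<n. \<forall>j<n. cnj (M i j) = M i j"
  shows "qform n M (\<lambda>i. cnj (z i)) (\<lambda>i. cnj (z i)) = cnj (qform n M z z)"
  unfolding qform_cnj using assms unfolding qform_def by simp

lemma qform_cnj_vectors_imaginary:
  assumes "\<forall>i<n. \<forall>j<n. cnj (M i j) = - M i j"
  shows "qform n M (\<lambda>i. cnj (z i)) (\<lambda>i. cnj (z i)) = - cnj (qform n M z z)"
  unfolding qform_cnj using assms unfolding qform_def by (simp add: sum_negf[symmetric])

context
  fixes n :: nat and M :: "nat \<Rightarrow> nat \<Rightarrow> complex"
  assumes imaginary: "\<forall>i<n. \<forall>j<n. cnj (M i j) = - M i j"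
    and psd: "\<And>z. 0 \<le> Re (qform n (\<lambda>i j. id_matrix i j + M i j) z z)"
begin

lemma imaginary_psd_abs_le: "\<bar>Re (qform n M z z)\<bar> \<le> Re (qform n id_matrix z z)"
proof -
  have id_real: "\<forall>i<n. \<forall>j<n. cnj (id_matrix i j) = id_matrix i j"
    by (simp add: id_matrix_def)
  have "0 \<le> Re (qform n id_matrix z z) + Re (qform n M z z)"
    using psd[of z] by (simp add: qform_add_matrix)
  moreover have "0 \<le> Re (qform n id_matrix z z) - Re (qform n M z z)"
    using psd[of "\<lambda>i. cnj (z i)"]
    by (simp add: qform_add_matrix qform_cnj_vectors_real[OF id_real]
        qform_cnj_vectors_imaginary[OF imaginary])
  ultimately show ?thesis by linarith
qed

lemma imaginary_psd_polar_le:
  "Re (qform n M x y + qform n M y x) \<le> Re (qform n id_matrix x x + qform n id_matrix y y)"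
proof -
  let ?s = "\<lambda>i. x i + y i" and ?d = "\<lambda>i. x i - y i"
  have "Re (qform n M ?s ?s) \<le> Re (qform n id_matrix ?s ?s)"
    and "- Re (qform n M ?d ?d) \<le> Re (qform n id_matrix ?d ?d)"
    using imaginary_psd_abs_le[THEN abs_le_D1] imaginary_psd_abs_le[THEN abs_le_D2] by auto
  moreover have "Re (qform n M ?s ?s) - Re (qform n M ?d ?d) = 2 * Re (qform n M x y + qform n M y x)"
    using arg_cong[OF qform_polarization, of Re] by simp
  moreover have "Re (qform n id_matrix ?s ?s) + Re (qform n id_matrix ?d ?d)
      = 2 * Re (qform n id_matrix x x + qform n id_matrix y y)"
    using arg_cong[OF qform_parallelogram, of Re] by simp
  ultimately show ?thesis by linarith
qed

text \<open>Polarize between the unit vector e_j and the j-th column y of M: the form gives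
  (M^2)_jj on (e_j, y) and |y|^2 on (y, e_j), and the latter cancels.\<close>

lemma imaginary_psd_diag_square_le:
  assumes "j < n"
  shows "Re (\<Sum>k<n. M j k * M k j) \<le> 1"
proof -
  define e where "e i = (if i = j then 1 else 0 :: complex)" for i
  define y where "y i = M i j" for i
  have "qform n M e y = (\<Sum>k<n. M j k * M k j)"
    unfolding e_def y_def using assms by (rule qform_unit_left)
  moreover have "qform n M y e = qform n id_matrix y y"
    unfolding e_def y_def qform_id_matrix using assms by (rule qform_unit_right)
  moreover have "qform n id_matrix e e = 1"
    unfolding qform_id_matrix e_def using assms by (simp add: if_distrib cong: if_cong)
  ultimately show ?thesis
    using imaginary_psd_polar_le[of e y] by simp
qed

lemma imaginary_psd_trace_square_le: "Re (\<Sum>j<n. \<Sum>k<n. M j k * M k j) \<le> n"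
proof -
  have "Re (\<Sum>j<n. \<Sum>k<n. M j k * M k j) = (\<Sum>j<n. Re (\<Sum>k<n. M j k * M k j))"
    by (rule Re_sum)
  also have "\<dots> \<le> (\<Sum>j<n. 1)"
    by (intro sum_mono imaginary_psd_diag_square_le) simp
  finally show ?thesis by simp
qed

end

lemma sum_swap_pairs:
  "(\<Sum>i\<in>I. \<Sum>j\<in>J. \<Sum>a\<in>A. \<Sum>b\<in>B. h i j a b) = (\<Sum>a\<in>A. \<Sum>b\<in>B. \<Sum>i\<in>I. \<Sum>j\<in>J. h i j a b)"
  by (simp add: sum.swap[of _ J A] sum.swap[of _ I A] sum.swap[of _ J B] sum.swap[of _ I B])

lemma trace_square_orthogonal_combination:
  fixes m n :: nat and \<beta> :: "nat \<Rightarrow> nat \<Rightarrow> nat \<Rightarrow> complex"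
  assumes orth: "\<forall>a<m. \<forall>b<m. (\<Sum>i<n. \<Sum>j<n. \<beta> a i j * \<beta> b j i) = (if a = b then c else 0)"
  shows "(\<Sum>i<n. \<Sum>j<n. (\<Sum>a<m. of_real (v a) * \<beta> a i j) * (\<Sum>b<m. of_real (v b) * \<beta> b j i))
           = of_real (\<Sum>a<m. (v a)\<^sup>2) * c"
proof -
  have "(\<Sum>i<n. \<Sum>j<n. (\<Sum>a<m. of_real (v a) * \<beta> a i j) * (\<Sum>b<m. of_real (v b) * \<beta> b j i))
      = (\<Sum>a<m. \<Sum>b<m. \<Sum>i<n. \<Sum>j<n. of_real (v a * v b) * (\<beta> a i j * \<beta> b j i))"
    unfolding sum_product by (subst sum_swap_pairs) (intro sum.cong refl, simp add: mult_ac)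
  also have "\<dots> = (\<Sum>a<m. \<Sum>b<m. of_real (v a * v b) * (\<Sum>i<n. \<Sum>j<n. \<beta> a i j * \<beta> b j i))"
    by (simp only: sum_distrib_left)
  also have "\<dots> = (\<Sum>a<m. \<Sum>b<m. if a = b then of_real (v a * v b) * c else 0)"
    using orth by (intro sum.cong refl) simp
  also have "\<dots> = (\<Sum>a<m. of_real ((v a)\<^sup>2) * c)"
    by (simp add: power2_eq_square)
  also have "\<dots> = of_real (\<Sum>a<m. (v a)\<^sup>2) * c"
    by (simp only: of_real_sum sum_distrib_right)
  finally show ?thesis .
qed

lemma in_iD_imaginary:
  assumes "in_iD B" "i < 7" "j < 7"
  shows "cnj (B i j) = - B i j"
  using assms unfolding in_iD_def by auto

lemma density_matrix7_psd:
  assumes "density_matrix7 (\<lambda>i j. (1/7) * ((if i = j then 1 else 0) + X i j))"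
  shows "0 \<le> Re (qform 7 (\<lambda>i j. id_matrix i j + X i j) z z)"
proof -
  have "0 \<le> Re (qform 7 (\<lambda>i j. (1/7) * (id_matrix i j + X i j)) z z)"
    using assms unfolding density_matrix7_def qform_def id_matrix_def by blast
  then show ?thesis
    unfolding qform_scale_matrix by simp
qed

lemma sqrt_65_le: "sqrt 65 \<le> 8.25"
  by (rule real_le_lsqrt) (simp_all add: power2_eq_square)

theorem mainTheorem18:
  fixes \<beta> :: "nat \<Rightarrow> nat \<Rightarrow> nat \<Rightarrow> complex" and v :: "nat \<Rightarrow> real"
  assumes mem: "\<forall>a<14. in_iD (\<beta> a)"
    and spans: "\<forall>B. in_iD B \<longrightarrow>
                  (\<exists>c :: nat \<Rightarrow> real. \<forall>i<7. \<forall>j<7. B i j = (\<Sum>a<14. complex_of_real (c a) * \<beta> a i j))"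
    and orth: "\<forall>a<14. \<forall>b<14. (\<Sum>i<7. \<Sum>j<7. \<beta> a i j * \<beta> b j i) = (if a = b then 1/2 else 0)"
    and dens: "density_matrix7 (\<lambda>i j. (1/7) * ((if i = j then 1 else 0)
                    + (\<Sum>a<14. complex_of_real (v a) * \<beta> a i j)))"
  shows "(\<Sum>a<14. (v a)\<^sup>2) \<le> 8 * (10 - sqrt 65) \<and> sqrt (\<Sum>a<14. (v a)\<^sup>2) \<le> 3.93"
proof -
  define X where "X i j = (\<Sum>a<14. complex_of_real (v a) * \<beta> a i j)" for i j
  have imaginary: "\<forall>i<7. \<forall>j<7. cnj (X i j) = - X i j"
    using mem by (simp add: X_def in_iD_imaginary sum_negf[symmetric])
  have psd: "0 \<le> Re (qform 7 (\<lambda>i j. id_matrix i j + X i j) z z)" for z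
    using dens unfolding X_def by (rule density_matrix7_psd)
  have "Re (\<Sum>i<7. \<Sum>j<7. X i j * X j i) \<le> real 7"
    using imaginary psd by (rule imaginary_psd_trace_square_le)
  moreover have "(\<Sum>i<7. \<Sum>j<7. X i j * X j i) = of_real (\<Sum>a<14. (v a)\<^sup>2) * (1/2)"
    unfolding X_def using orth by (rule trace_square_orthogonal_combination)
  ultimately have norm_le: "(\<Sum>a<14. (v a)\<^sup>2) \<le> 14"
    by simp
  have "sqrt (\<Sum>a<14. (v a)\<^sup>2) \<le> 3.93"
    using norm_le by (intro real_le_lsqrt) (simp_all add: sum_nonneg power2_eq_square)
  then show ?thesis
    using norm_le sqrt_65_le by simp
qed

end
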